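(* Let $\mathbb{X}$ be an idempotent semifield as described in the context. Let $A\in\mathbb{X}^{m\times n}$ be a regular matrix and $\bm{b},\bm{c}\in\mathbb{X}^{m}$ regular vectors, and put $\Delta=\sqrt{(A(\bm{c}^{-}A)^{-})^{-}\bm{b}}$, so that $\min_{\bm{x}\in\mathbb{X}_{+}^{n}}\big((A\bm{x})^{-}\bm{b}\oplus\bm{c}^{-}A\bm{x}\big)=\Delta$. Then: (i) every vector $\bm{x}$ at which this minimum is attained (i.e. $(A\bm{x})^{-}\bm{b}\oplus\bm{c}^{-}A\bm{x}=\Delta$) satisfies $\Delta^{-1}\bm{b}\le A\bm{x}\le\Delta\bm{c}$; (ii) if $\bm{u}$ satisfies $A\bm{u}=\bm{b}$, then the minimum is attained at $\bm{x}=\Delta^{-1}\bm{u}$, i.e. $(A\bm{x})^{-}\bm{b}\oplus\bm{c}^{-}A\bm{x}=\Delta$ for this $\bm{x}$; (iii) if $\bm{v}$ satisfies $A\bm{v}=\bm{c}$, then the minimum is attained at $\bm{x}=\Delta\bm{v}$.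
   Context: $\mathbb{X}$ is a commutative semiring $(\mathbb{X},\mathbb{0},\mathbb{1},\oplus,\otimes)$ with zero $\mathbb{0}$ and identity $\mathbb{1}$, in which addition is idempotent and every nonzero element has a multiplicative inverse $x^{-1}$ (an idempotent semifield). The semifield is assumed radicable (rational powers of nonzero elements exist; $\sqrt{x}=x^{1/2}$) and totally ordered by the order induced by addition: $x\le y$ iff $x\oplus y=y$. The multiplication sign is omitted. $\mathbb{X}_{+}=\mathbb{X}\setminus\{\mathbb{0}\}$, and $\mathbb{X}_{+}^{n}$ is the set of regular $n$-vectors (all entries nonzero); a matrix is regular if it has no zero rows. Matrix/vector operations use $\oplus,\otimes$ in place of $+,\times$; vector inequalities are componentwise. The pseudo-inverse of a nonzero (column or row) vector $\bm{x}=(x_i)$ is the transposed vector $\bm{x}^{-}$ with entries $x_i^{-1}$ if $x_i\ne\mathbb{0}$ and $\mathbb{0}$ otherwise. *)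

theory Defs
  imports Main
begin

class idem_semifield = comm_semiring_1 + inverse + linorder +
  assumes le_iff_add: "x \<le> y \<longleftrightarrow> x + y = y"
  and right_inverse_nz: "x \<noteq> 0 \<Longrightarrow> x * inverse x = 1"
  and radicable: "x \<noteq> 0 \<Longrightarrow> 0 < n \<Longrightarrow> \<exists>y. y ^ n = x"

definition ssqrt :: "'a::idem_semifield \<Rightarrow> 'a" where
  "ssqrt x = (THE y. y * y = x)"

text \<open>Pseudo-inverse (transposition is implicit: row and column vectors are both
functions of the index).\<close>
definition pinv :: "('i \<Rightarrow> 'a::idem_semifield) \<Rightarrow> ('i \<Rightarrow> 'a)" where
  "pinv v = (\<lambda>i. if v i = 0 then 0 else inverse (v i))"

definition dotp :: "('i::finite \<Rightarrow> 'a::idem_semifield) \<Rightarrow> ('i \<Rightarrow> 'a) \<Rightarrow> 'a" where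
  "dotp u v = (\<Sum>i\<in>UNIV. u i * v i)"

definition mv :: "('m \<Rightarrow> 'n::finite \<Rightarrow> 'a::idem_semifield) \<Rightarrow> ('n \<Rightarrow> 'a) \<Rightarrow> ('m \<Rightarrow> 'a)" where
  "mv A x = (\<lambda>i. \<Sum>j\<in>UNIV. A i j * x j)"

definition vm :: "('m::finite \<Rightarrow> 'a::idem_semifield) \<Rightarrow> ('m \<Rightarrow> 'n \<Rightarrow> 'a) \<Rightarrow> ('n \<Rightarrow> 'a)" where
  "vm y A = (\<lambda>j. \<Sum>i\<in>UNIV. y i * A i j)"

definition smul :: "'a::idem_semifield \<Rightarrow> ('i \<Rightarrow> 'a) \<Rightarrow> ('i \<Rightarrow> 'a)" where
  "smul s v = (\<lambda>i. s * v i)"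

definition regular_vec :: "('i \<Rightarrow> 'a::idem_semifield) \<Rightarrow> bool" where
  "regular_vec v \<longleftrightarrow> (\<forall>i. v i \<noteq> 0)"

definition regular_mat :: "('m \<Rightarrow> 'n \<Rightarrow> 'a::idem_semifield) \<Rightarrow> bool" where
  "regular_mat A \<longleftrightarrow> (\<forall>i. \<exists>j. A i j \<noteq> 0)"

definition objf :: "('m::finite \<Rightarrow> 'n::finite \<Rightarrow> 'a::idem_semifield) \<Rightarrow> ('m \<Rightarrow> 'a) \<Rightarrow> ('m \<Rightarrow> 'a) \<Rightarrow> ('n \<Rightarrow> 'a) \<Rightarrow> 'a" where
  "objf A b c x = dotp (pinv (mv A x)) b + dotp (pinv c) (mv A x)"

definition Delta :: "('m::finite \<Rightarrow> 'n::finite \<Rightarrow> 'a::idem_semifield) \<Rightarrow> ('m \<Rightarrow> 'a) \<Rightarrow> ('m \<Rightarrow> 'a) \<Rightarrow> 'a" where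
  "Delta A b c = ssqrt (dotp (pinv (mv A (pinv (vm (pinv c) A)))) b)"

end

theory Submission
  imports Defs
begin

text \<open>Write \<open>y = Ax\<close>. Componentwise, \<open>(Ax)\<^sup>- b \<oplus> c\<^sup>- Ax \<le> \<Delta>\<close> says exactly
  \<open>\<Delta>\<^sup>-\<^sup>1 b \<le> y \<le> \<Delta> c\<close>, and the objective is at least \<open>\<Delta>\<close> as soon as one of these two bounds
  is attained in a single component. This gives (i) at once. For (ii) and (iii) the vector
  \<open>y\<close> is \<open>\<Delta>\<^sup>-\<^sup>1 b\<close> resp. \<open>\<Delta> c\<close>, so one bound holds with equality everywhere and the other one
  reduces to \<open>\<Delta>\<^sup>-\<^sup>1 b \<le> \<Delta> c\<close>, i.e. \<open>c\<^sub>i\<^sup>-\<^sup>1 b\<^sub>i \<le> \<Delta>\<^sup>2 = (A(c\<^sup>-A)\<^sup>-)\<^sup>- b\<close>. This holds because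
  \<open>p = A(c\<^sup>-A)\<^sup>-\<close> is regular and \<open>p \<le> c\<close>, so \<open>c\<^sup>- \<le> p\<^sup>-\<close>.\<close>

context idem_semifield
begin

lemma add_eq_max: "x + y = max x y"
proof (cases "x \<le> y")
  case True then show ?thesis using local.le_iff_add by (simp add: max_def)
next
  case False
  then have "y + x = x" using local.le_iff_add[of y x] le_cases by blast
  with False show ?thesis by (simp add: max_def add.commute)
qed

subclass canonically_ordered_monoid_add
  by standard (metis add_eq_max max.cobounded1 local.le_iff_add)

subclass ordered_comm_semiring
  by standard (metis distrib_left local.le_iff_add)

lemma left_inverse_nz: "x \<noteq> 0 \<Longrightarrow> inverse x * x = 1"
  using right_inverse_nz by (simp add: mult.commute)

subclass semiring_no_zero_divisors
proof
  fix a b assume "a \<noteq> 0" "b \<noteq> 0"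
  show "a * b \<noteq> 0"
  proof
    assume "a * b = 0"
    then have "inverse a * a * b = 0" by (simp add: mult.assoc)
    with \<open>a \<noteq> 0\<close> \<open>b \<noteq> 0\<close> show False by (simp add: left_inverse_nz)
  qed
qed

lemma inverse_nz: "x \<noteq> 0 \<Longrightarrow> inverse x \<noteq> 0"
  by (metis mult_zero_right zero_neq_one right_inverse_nz)

lemma inverse_mult_le_iff: "c \<noteq> 0 \<Longrightarrow> inverse c * a \<le> b \<longleftrightarrow> a \<le> c * b"
proof
  assume "c \<noteq> 0" "inverse c * a \<le> b"
  then have "c * (inverse c * a) \<le> c * b" by (simp add: mult_left_mono)
  with \<open>c \<noteq> 0\<close> show "a \<le> c * b" by (simp add: mult.assoc[symmetric] right_inverse_nz)
next
  assume "c \<noteq> 0" "a \<le> c * b"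
  then have "inverse c * a \<le> inverse c * (c * b)" by (simp add: mult_left_mono)
  with \<open>c \<noteq> 0\<close> show "inverse c * a \<le> b" by (simp add: mult.assoc[symmetric] left_inverse_nz)
qed

lemma le_inverse_mult_iff: "c \<noteq> 0 \<Longrightarrow> a \<le> inverse c * b \<longleftrightarrow> c * a \<le> b"
proof
  assume "c \<noteq> 0" "a \<le> inverse c * b"
  then have "c * a \<le> c * (inverse c * b)" by (simp add: mult_left_mono)
  with \<open>c \<noteq> 0\<close> show "c * a \<le> b" by (simp add: mult.assoc[symmetric] right_inverse_nz)
next
  assume "c \<noteq> 0" "c * a \<le> b"
  then have "inverse c * (c * a) \<le> inverse c * b" by (simp add: mult_left_mono)
  with \<open>c \<noteq> 0\<close> show "a \<le> inverse c * b" by (simp add: mult.assoc[symmetric] left_inverse_nz)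
qed

lemma inverse_mult_le_mult_iff:
  "c \<noteq> 0 \<Longrightarrow> d \<noteq> 0 \<Longrightarrow> inverse d * b \<le> d * c \<longleftrightarrow> inverse c * b \<le> d * d"
  using inverse_mult_le_iff[of d b "d * c"] inverse_mult_le_iff[of c b "d * d"] by (simp add: ac_simps)

lemma inverse_antimono: "x \<noteq> 0 \<Longrightarrow> x \<le> y \<Longrightarrow> inverse y \<le> inverse x"
proof -
  assume "x \<noteq> 0" "x \<le> y"
  then have "y \<noteq> 0" by (auto simp: le_zero_eq)
  have "x * inverse y \<le> 1"
    using \<open>y \<noteq> 0\<close> \<open>x \<le> y\<close> mult_right_mono[of x y "inverse y"] by (simp add: right_inverse_nz)
  with \<open>x \<noteq> 0\<close> show ?thesis using le_inverse_mult_iff[of x "inverse y" 1] by simp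
qed

lemma mult_self_inj: "x * x = y * y \<Longrightarrow> x = y"
proof (induction x y rule: linorder_wlog)
  case (le x y)
  show ?case
  proof (cases "y = 0")
    case True
    with le show ?thesis by simp
  next
    case False
    have "x * y = y * y"
      using le mult_left_mono[of x y x] mult_right_mono[of x y y] by (simp add: order.antisym)
    then have "x * y * inverse y = y * y * inverse y" by simp
    with False show ?thesis by (simp add: mult.assoc right_inverse_nz)
  qed
qed (simp add: eq_commute)

lemma sum_le_iff: "finite S \<Longrightarrow> sum f S \<le> c \<longleftrightarrow> (\<forall>i\<in>S. f i \<le> c)"
  by (induction S rule: finite_induct) (auto simp: add_eq_max)

end

lemma ssqrt_mult_self: "ssqrt x * ssqrt x = x"
proof -
  have "\<exists>y. y * y = x"
  proof (cases "x = 0")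
    case False
    then obtain y where "y ^ 2 = x" using radicable[of x 2] by auto
    then show ?thesis by (auto simp: power2_eq_square)
  qed simp
  then have "\<exists>!y. y * y = x" using mult_self_inj by blast
  then show ?thesis unfolding ssqrt_def by (rule theI')
qed

lemma dotp_le_iff: "dotp u v \<le> d \<longleftrightarrow> (\<forall>i. u i * v i \<le> d)"
  by (simp add: dotp_def sum_le_iff)

lemma le_dotp: "u i * v i \<le> dotp u v"
  unfolding dotp_def by (rule member_le_sum) auto

lemma regular_vec_mv: "regular_mat A \<Longrightarrow> regular_vec x \<Longrightarrow> regular_vec (mv A x)"
  unfolding regular_mat_def regular_vec_def mv_def by (metis finite sum_eq_0_iff UNIV_I no_zero_divisors)

lemma mv_smul: "mv A (smul s x) = smul s (mv A x)"
  by (auto simp: mv_def smul_def sum_distrib_left ac_simps)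

lemma objf_le_iff:
  assumes "regular_vec c" and "regular_vec (mv A x)" and "d \<noteq> 0"
  shows "objf A b c x \<le> d \<longleftrightarrow> (\<forall>i. inverse d * b i \<le> mv A x i \<and> mv A x i \<le> d * c i)"
  using assms by (simp add: objf_def add_eq_max dotp_le_iff regular_vec_def pinv_def
      inverse_mult_le_iff mult.commute[of _ d] all_conj_distrib)

lemma objf_eq_if_bound_attained:
  assumes c: "regular_vec c" and d: "d \<noteq> 0" and Ax: "mv A x = y" and y: "regular_vec y"
    and bounds: "\<And>i. inverse d * b i \<le> y i \<and> y i \<le> d * c i"
    and attained: "y i = inverse d * b i \<or> y i = d * c i"
  shows "objf A b c x = d"
proof (rule order.antisym)
  show "objf A b c x \<le> d" using objf_le_iff[of c A x d b] c y d bounds unfolding Ax by blast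
  have y_i: "y i \<noteq> 0" and c_i: "c i \<noteq> 0" using y c by (auto simp: regular_vec_def)
  from attained have "d \<le> pinv y i * b i \<or> d \<le> pinv c i * y i"
  proof
    assume "y i = inverse d * b i"
    then have "y i * d = (inverse d * d) * b i" by (simp add: ac_simps)
    with d y_i show ?thesis by (simp add: pinv_def left_inverse_nz le_inverse_mult_iff)
  next
    assume "y i = d * c i"
    with c_i show ?thesis by (simp add: pinv_def le_inverse_mult_iff mult.commute)
  qed
  then show "d \<le> objf A b c x"
    unfolding objf_def add_eq_max Ax by (meson le_dotp le_max_iff_disj order.trans)
qed

lemma mv_pinv_vm_pinv_le:
  assumes "regular_vec c"
  shows "mv A (pinv (vm (pinv c) A)) i \<le> c i"
proof -
  let ?w = "vm (pinv c) A"
  have "A i k * pinv ?w k \<le> c i" for k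
  proof (cases "?w k = 0")
    case False
    have "pinv c i * A i k \<le> ?w k" unfolding vm_def by (rule member_le_sum) auto
    with assms have "inverse (c i) * A i k \<le> ?w k" by (simp add: regular_vec_def pinv_def)
    with assms have "A i k \<le> c i * ?w k" by (simp add: regular_vec_def inverse_mult_le_iff)
    then have "A i k \<le> ?w k * c i" by (simp add: mult.commute)
    with False have "inverse (?w k) * A i k \<le> c i" by (simp add: inverse_mult_le_iff)
    with False show ?thesis by (simp add: pinv_def mult.commute)
  qed (simp add: pinv_def)
  then show ?thesis by (simp add: mv_def sum_le_iff)
qed

lemma regular_vec_mv_pinv_vm_pinv:
  assumes A: "regular_mat A" and c: "regular_vec c"
  shows "regular_vec (mv A (pinv (vm (pinv c) A)))"
  unfolding regular_vec_def
proof
  fix i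
  let ?w = "vm (pinv c) A"
  obtain j where j: "A i j \<noteq> 0" using A by (auto simp: regular_mat_def)
  have "pinv c i * A i j \<le> ?w j" unfolding vm_def by (rule member_le_sum) auto
  moreover have "pinv c i * A i j \<noteq> 0" using c j by (simp add: regular_vec_def pinv_def inverse_nz)
  ultimately have "?w j \<noteq> 0" by (metis le_zero_eq)
  then have "A i j * pinv ?w j \<noteq> 0" using j by (simp add: pinv_def inverse_nz)
  then show "mv A (pinv ?w) i \<noteq> 0" unfolding mv_def by (metis finite sum_eq_0_iff UNIV_I)
qed

lemma Delta_nonzero_and_sandwich:
  assumes A: "regular_mat A" and b: "regular_vec b" and c: "regular_vec c"
  shows "Delta A b c \<noteq> 0" and "inverse (Delta A b c) * b i \<le> Delta A b c * c i"
proof -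
  let ?p = "mv A (pinv (vm (pinv c) A))"
  have p: "regular_vec ?p" using regular_vec_mv_pinv_vm_pinv[OF A c] .
  have square: "Delta A b c * Delta A b c = dotp (pinv ?p) b"
    unfolding Delta_def by (rule ssqrt_mult_self)
  have "inverse (c i) \<le> inverse (?p i)"
    by (rule inverse_antimono) (use p mv_pinv_vm_pinv_le[OF c] in \<open>auto simp: regular_vec_def\<close>)
  then have "inverse (c i) * b i \<le> inverse (?p i) * b i" by (simp add: mult_right_mono)
  also have "\<dots> \<le> dotp (pinv ?p) b" using le_dotp[of "pinv ?p" i b] p by (simp add: regular_vec_def pinv_def)
  finally have bound: "inverse (c i) * b i \<le> Delta A b c * Delta A b c" by (simp add: square)
  moreover have "inverse (c i) * b i \<noteq> 0" using b c by (simp add: regular_vec_def inverse_nz)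
  ultimately show d: "Delta A b c \<noteq> 0" by (metis le_zero_eq mult_zero_left)
  show "inverse (Delta A b c) * b i \<le> Delta A b c * c i"
    using bound c d by (simp add: regular_vec_def inverse_mult_le_mult_iff)
qed

theorem corollary1:
  fixes A :: "'m::finite \<Rightarrow> 'n::finite \<Rightarrow> 'a::idem_semifield"
    and b c :: "'m \<Rightarrow> 'a"
  assumes "regular_mat A" and "regular_vec b" and "regular_vec c"
  shows "(\<forall>x. regular_vec x \<and> objf A b c x = Delta A b c \<longrightarrow>
            (\<forall>i. inverse (Delta A b c) * b i \<le> mv A x i \<and> mv A x i \<le> Delta A b c * c i))
       \<and> (\<forall>u. mv A u = b \<longrightarrow> objf A b c (smul (inverse (Delta A b c)) u) = Delta A b c)
       \<and> (\<forall>v. mv A v = c \<longrightarrow> objf A b c (smul (Delta A b c) v) = Delta A b c)"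
proof (intro conjI allI impI)
  let ?d = "Delta A b c"
  note d = Delta_nonzero_and_sandwich[OF assms]
  note objf_eq = objf_eq_if_bound_attained[OF assms(3) d(1) mv_smul, where i = undefined]
  show "inverse ?d * b i \<le> mv A x i" and "mv A x i \<le> ?d * c i"
    if x: "regular_vec x \<and> objf A b c x = ?d" for x i
  proof -
    from x have "objf A b c x \<le> ?d" by simp
    with x show "inverse ?d * b i \<le> mv A x i" and "mv A x i \<le> ?d * c i"
      using objf_le_iff[OF assms(3) regular_vec_mv[OF assms(1)] d(1)] by blast+
  qed
  show "objf A b c (smul (inverse ?d) u) = ?d" if "mv A u = b" for u
    by (rule objf_eq) (use that assms(2) d in \<open>auto simp: smul_def regular_vec_def inverse_nz\<close>)
  show "objf A b c (smul ?d v) = ?d" if "mv A v = c" for v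
    by (rule objf_eq) (use that assms(3) d in \<open>auto simp: smul_def regular_vec_def\<close>)
qed

end
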